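(* Let $\ell$ be a prime and let $r$ be an integer with $1\leq r\leq \ell-1$ such that $p(\ell n+r)\equiv 0\pmod{\ell}$ for all $n\geq 0$. Then for all $n\geq 0$, $d_\ell(\ell n+r)\equiv 0 \pmod{\ell}$.
   Context: $p(n)$ denotes the number of unrestricted partitions of $n$. For each integer $k\geq 1$, the numbers $d_k(n)$ are defined by $\sum_{n\geq 0} d_k(n)q^n = \frac{f_2^k}{f_1^{3k+1}}$, where $f_r = \prod_{i\geq 1}(1-q^{ri})$. *)

theory Defs
  imports "HOL-Computational_Algebra.Formal_Power_Series" "HOL-Library.Multiset"
begin

definition partitions_of :: "nat \<Rightarrow> nat multiset set" where
  "partitions_of n = {P. (\<forall>x\<in>#P. x > 0) \<and> sum_mset P = n}"

definition part :: "nat \<Rightarrow> nat" where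
  "part n = card (partitions_of n)"

text \<open>f_r = prod_{i>=1} (1 - q^(r i)) as an integer formal power series; the n-th
  coefficient is that of the truncated product over 1 <= i <= n (later factors
  do not affect coefficients of degree <= n when r >= 1).\<close>
definition f :: "nat \<Rightarrow> int fps" where
  "f r = Abs_fps (\<lambda>n. fps_nth (\<Prod>i\<in>{1..n}. (1 - fps_X ^ (r * i) :: int fps)) n)"

text \<open>d_k(n): coefficients of f_2^k / f_1^(3k+1).  Since f_1 has constant term 1,
  the quotient is f_2^k times the (unique) inverse power series of f_1^(3k+1).\<close>
definition d :: "nat \<Rightarrow> nat \<Rightarrow> int" where
  "d k n = fps_nth (f 2 ^ k * fps_right_inverse (f 1 ^ (3 * k + 1)) 1) n"

end

theory Submission
  imports Defs "HOL-Computational_Algebra.Primes" "HOL-Number_Theory.Cong"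
begin

text \<open>
  Split f_2^l / f_1^(3l+1) = E * P, where P = 1 / f_1 generates p(n) and E = f_2^l / f_1^(3l).
  The freshman's dream gives f_r^l = f_(rl) mod l, so E * f_l^3 = f_(2l) mod l. Since f_l^3 and
  f_(2l) are series in q^l and f_l^3 has constant term 1, E is congruent mod l to a series in q^l.
  Hence every term of d_l(ln + r) = sum_i E(i) p(ln + r - i) is divisible by l: either l does not
  divide i and l | E(i), or i = lj and l | p(l(n - j) + r).
\<close>

unbundle fps_syntax

definition fps_cong :: "'a::unique_euclidean_semiring fps \<Rightarrow> 'a fps \<Rightarrow> 'a \<Rightarrow> bool" where
  "fps_cong A B m \<longleftrightarrow> (\<forall>n. [A $ n = B $ n] (mod m))"

lemma fps_cong_refl [simp]: "fps_cong A A m"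
  by (simp add: fps_cong_def)

lemma fps_cong_sym: "fps_cong A B m \<Longrightarrow> fps_cong B A m"
  by (simp add: fps_cong_def cong_sym)

lemma fps_cong_trans [trans]: "fps_cong A B m \<Longrightarrow> fps_cong B C m \<Longrightarrow> fps_cong A C m"
  unfolding fps_cong_def using cong_trans by blast

lemma fps_cong_mult: "fps_cong A B m \<Longrightarrow> fps_cong C D m \<Longrightarrow> fps_cong (A * C) (B * D) m"
  unfolding fps_cong_def fps_mult_nth by (blast intro: cong_sum cong_mult)

lemma fps_cong_power: "fps_cong A B m \<Longrightarrow> fps_cong (A ^ k) (B ^ k) m"
  by (induction k) (simp_all add: fps_cong_mult)

lemma fps_cong_prod:
  "(\<And>i. i \<in> I \<Longrightarrow> fps_cong (A i) (B i) m) \<Longrightarrow> fps_cong (\<Prod>i\<in>I. A i) (\<Prod>i\<in>I. B i) m"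
  by (induction I rule: infinite_finite_induct) (simp_all add: fps_cong_mult)

lemma fps_cong_add_multiple: "fps_cong (B + fps_const m * Z) B m"
  by (simp add: fps_cong_def cong_def)

lemma freshmans_dream_mod_prime:
  fixes x y :: "'a::comm_semiring_1"
  assumes "prime p"
  obtains z where "(x + y) ^ p = x ^ p + y ^ p + of_nat p * z"
proof -
  have p0: "p > 0" using assms prime_gt_0_nat by blast
  have "\<forall>k\<in>{1..<p}. p dvd (p choose k)"
    using assms by (auto intro: dvd_choose_prime)
  then obtain c where c: "\<And>k. k \<in> {1..<p} \<Longrightarrow> p choose k = p * c k"
    unfolding dvd_def by metis
  have "{..p} = insert 0 (insert p {1..<p})" using p0 by auto
  then have "(x + y) ^ p = x ^ p + y ^ p + (\<Sum>k\<in>{1..<p}. of_nat (p choose k) * x ^ k * y ^ (p - k))"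
    using p0 by (simp add: binomial_ring add_ac)
  also have "(\<Sum>k\<in>{1..<p}. of_nat (p choose k) * x ^ k * y ^ (p - k))
      = of_nat p * (\<Sum>k\<in>{1..<p}. of_nat (c k) * x ^ k * y ^ (p - k))"
    by (simp add: c sum_distrib_left mult.assoc)
  finally show thesis by (rule that)
qed

lemma fps_cong_one_minus_X_power_prime:
  fixes m :: nat
  assumes "prime p"
  shows "fps_cong ((1 - fps_X ^ m :: 'a::unique_euclidean_ring fps) ^ p) (1 - fps_X ^ (m * p)) (of_nat p)"
proof -
  \<comment> \<open>Apply the freshman's dream to the decomposition \<open>1 = (1 - x) + x\<close>.\<close>
  obtain z :: "'a fps" where "((1 - fps_X ^ m) + fps_X ^ m) ^ p = (1 - fps_X ^ m) ^ p + (fps_X ^ m) ^ p + of_nat p * z"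
    using freshmans_dream_mod_prime[OF assms] by blast
  then have "(1 - fps_X ^ m :: 'a fps) ^ p = (1 - fps_X ^ (m * p)) + fps_const (of_nat p) * (- z)"
    by (simp add: power_mult fps_of_nat algebra_simps)
  then show ?thesis
    using fps_cong_add_multiple by metis
qed

definition f_partial :: "nat \<Rightarrow> nat \<Rightarrow> int fps" where
  "f_partial r N = (\<Prod>i\<in>{1..N}. 1 - fps_X ^ (r * i))"

lemma f_partial_Suc: "f_partial r (Suc N) = f_partial r N * (1 - fps_X ^ (r * Suc N))"
  by (simp add: f_partial_def prod.nat_ivl_Suc' mult.commute)

lemma fps_mult_one_minus_X_power_nth:
  fixes A :: "'a::comm_ring_1 fps"
  shows "k < m \<Longrightarrow> (A * (1 - fps_X ^ m)) $ k = A $ k"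
  by (simp add: right_diff_distrib fps_X_power_mult_right_nth)

lemma f_partial_nth_stable:
  assumes "1 \<le> r" "k \<le> N" "N \<le> M"
  shows "f_partial r M $ k = f_partial r N $ k"
  using assms(3)
proof (induction M rule: dec_induct)
  case (step M)
  have "Suc M \<le> r * Suc M"
    using mult_le_mono1[OF assms(1), of "Suc M"] by simp
  then have "k < r * Suc M"
    using assms(2) step.hyps by linarith
  then show ?case
    using step.IH by (simp add: f_partial_Suc fps_mult_one_minus_X_power_nth)
qed simp

lemma f_nth: "f r $ k = f_partial r k $ k"
  by (simp add: f_def f_partial_def)

lemma f_nth_eq_f_partial:
  assumes "1 \<le> r" "k \<le> N"
  shows "f r $ k = f_partial r N $ k"
  using f_partial_nth_stable[OF assms(1) order.refl assms(2)] by (simp add: f_nth)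

lemma f_nth_0: "f r $ 0 = 1"
  by (simp add: f_nth f_partial_def)

lemma fps_cutoff_mult_cong:
  assumes "fps_cutoff n A = fps_cutoff n B" "fps_cutoff n C = fps_cutoff n D"
  shows "fps_cutoff n (A * C) = fps_cutoff n (B * D)"
  unfolding fps_cutoff_eq_fps_cutoff_iff
proof (intro allI impI)
  fix k assume "k < n"
  then have "(A * C) $ k = (fps_cutoff n A * fps_cutoff n C) $ k"
    by (simp add: fps_cutoff_left_mult_nth fps_cutoff_right_mult_nth)
  also have "\<dots> = (B * D) $ k"
    using \<open>k < n\<close> by (simp add: assms fps_cutoff_left_mult_nth fps_cutoff_right_mult_nth)
  finally show "(A * C) $ k = (B * D) $ k" .
qed

lemma fps_cutoff_power_cong:
  assumes "fps_cutoff n A = fps_cutoff n B"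
  shows "fps_cutoff n (A ^ k) = fps_cutoff n (B ^ k)"
proof (induction k)
  case (Suc k)
  then show ?case
    using fps_cutoff_mult_cong[OF assms] by simp
qed simp

lemma fps_cutoff_f: "1 \<le> r \<Longrightarrow> fps_cutoff (Suc N) (f r) = fps_cutoff (Suc N) (f_partial r N)"
  by (simp add: fps_cutoff_eq_fps_cutoff_iff f_nth_eq_f_partial)

lemma f_partial_power_prime_cong:
  assumes "prime p"
  shows "fps_cong (f_partial r N ^ p) (f_partial (r * p) N) (int p)"
  unfolding f_partial_def prod_power_distrib
proof (rule fps_cong_prod)
  fix i
  show "fps_cong ((1 - fps_X ^ (r * i)) ^ p) (1 - fps_X ^ (r * p * i)) (int p)"
    using fps_cong_one_minus_X_power_prime[OF assms, of "r * i"] by (simp add: ac_simps)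
qed

lemma f_power_prime_cong:
  assumes "prime p" "1 \<le> r"
  shows "fps_cong (f r ^ p) (f (r * p)) (int p)"
  unfolding fps_cong_def
proof
  fix n
  have "1 \<le> r * p" using assms prime_ge_1_nat by simp
  then have "f (r * p) $ n = f_partial (r * p) n $ n"
    by (simp add: f_nth_eq_f_partial)
  moreover have "(f r ^ p) $ n = (f_partial r n ^ p) $ n"
    using fps_cutoff_power_cong[OF fps_cutoff_f[OF assms(2)]]
    by (metis fps_cutoff_eq_fps_cutoff_iff lessI)
  moreover have "[(f_partial r n ^ p) $ n = f_partial (r * p) n $ n] (mod int p)"
    using f_partial_power_prime_cong[OF assms(1)] unfolding fps_cong_def by blast
  ultimately show "[(f r ^ p) $ n = f (r * p) $ n] (mod int p)"
    by (simp only:)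
qed

definition supported_on_multiples :: "nat \<Rightarrow> 'a::zero fps \<Rightarrow> bool" where
  "supported_on_multiples l A \<longleftrightarrow> (\<forall>k. \<not> l dvd k \<longrightarrow> A $ k = 0)"

lemma supported_on_multiples_one [simp]: "supported_on_multiples l (1 :: 'a::comm_semiring_1 fps)"
  by (simp add: supported_on_multiples_def)

lemma supported_on_multiples_mult:
  fixes A B :: "'a::comm_semiring_1 fps"
  assumes "supported_on_multiples l A" "supported_on_multiples l B"
  shows "supported_on_multiples l (A * B)"
  unfolding supported_on_multiples_def
proof (intro allI impI)
  fix k assume k: "\<not> l dvd k"
  have "A $ i * B $ (k - i) = 0" if "i \<le> k" for i
  proof -
    have "\<not> l dvd i \<or> \<not> l dvd (k - i)"
      using k that dvd_diffD[of l k i] by blast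
    then show ?thesis
      using assms unfolding supported_on_multiples_def by auto
  qed
  then show "(A * B) $ k = 0"
    by (simp add: fps_mult_nth)
qed

lemma supported_on_multiples_power:
  fixes A :: "'a::comm_semiring_1 fps"
  shows "supported_on_multiples l A \<Longrightarrow> supported_on_multiples l (A ^ j)"
  by (induction j) (simp_all add: supported_on_multiples_mult)

lemma supported_on_multiples_prod:
  fixes A :: "'b \<Rightarrow> 'a::comm_semiring_1 fps"
  shows "(\<And>i. i \<in> I \<Longrightarrow> supported_on_multiples l (A i))
    \<Longrightarrow> supported_on_multiples l (\<Prod>i\<in>I. A i)"
  by (induction I rule: infinite_finite_induct) (simp_all add: supported_on_multiples_mult)

lemma supported_on_multiples_one_minus_X_power:
  "l dvd m \<Longrightarrow> supported_on_multiples l (1 - fps_X ^ m :: 'a::comm_ring_1 fps)"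
  by (auto simp: supported_on_multiples_def fps_X_power_iff)

lemma supported_on_multiples_f: "supported_on_multiples l (f (r * l))"
proof -
  have "supported_on_multiples l (f_partial (r * l) k)" for k
    unfolding f_partial_def
    by (intro supported_on_multiples_prod supported_on_multiples_one_minus_X_power) simp
  then show ?thesis
    by (simp add: supported_on_multiples_def f_nth)
qed

lemma dvd_nth_of_mult_cong_supported:
  fixes E H K :: "'a::unique_euclidean_ring fps"
  assumes "fps_cong (E * H) K m" "H $ 0 = 1"
    and "supported_on_multiples l H" "supported_on_multiples l K"
  shows "\<not> l dvd k \<Longrightarrow> m dvd E $ k"
proof (induction k rule: less_induct)
  case (less k)
  \<comment> \<open>In \<open>(E * H) $ k \<equiv> K $ k = 0\<close> every term \<open>E $ i * H $ (k - i)\<close> with \<open>i < k\<close> is divisible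
     by \<open>m\<close>: by induction if \<open>l\<close> divides \<open>k - i\<close>, and because \<open>H $ (k - i) = 0\<close> otherwise.\<close>
  have "(E * H) $ k = (\<Sum>i<k. E $ i * H $ (k - i)) + E $ k"
    using assms(2) by (simp add: fps_mult_nth atLeast0AtMost lessThan_Suc_atMost[symmetric])
  then have "E $ k = (E * H) $ k - (\<Sum>i<k. E $ i * H $ (k - i))"
    by simp
  moreover have "m dvd (\<Sum>i<k. E $ i * H $ (k - i))"
  proof (intro dvd_sum)
    fix i assume "i \<in> {..<k}"
    then have i: "i < k" by simp
    show "m dvd E $ i * H $ (k - i)"
    proof (cases "l dvd (k - i)")
      case True
      then have "\<not> l dvd i"
        using less.prems i dvd_diffD[of l k i] by auto
      then show ?thesis using less.IH i by simp
    next
      case False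
      then show ?thesis using assms(3) unfolding supported_on_multiples_def by simp
    qed
  qed
  moreover have "[(E * H) $ k = K $ k] (mod m)"
    using assms(1) by (simp add: fps_cong_def)
  moreover have "K $ k = 0"
    using assms(4) less.prems by (simp add: supported_on_multiples_def)
  ultimately show ?case
    by (simp add: cong_0_iff)
qed

lemma eta_quotient_nth_dvd:
  assumes "prime l" "1 \<le> s" "1 \<le> t"
    and "E * f s ^ (l * b) = f t ^ (l * a)"
    and "\<not> l dvd k"
  shows "int l dvd E $ k"
proof (rule dvd_nth_of_mult_cong_supported)
  have "fps_cong (E * f (s * l) ^ b) (E * (f s ^ l) ^ b) (int l)"
    using f_power_prime_cong[OF assms(1,2)]
    by (intro fps_cong_mult fps_cong_refl fps_cong_power) (rule fps_cong_sym)
  also have "E * (f s ^ l) ^ b = (f t ^ l) ^ a"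
    using assms(4) by (simp add: power_mult)
  also have "fps_cong \<dots> (f (t * l) ^ a) (int l)"
    using f_power_prime_cong[OF assms(1,3)] by (rule fps_cong_power)
  finally show "fps_cong (E * f (s * l) ^ b) (f (t * l) ^ a) (int l)" .
  show "f (s * l) ^ b $ 0 = 1"
    by (simp add: fps_nth_power_0 f_nth_0)
  show "supported_on_multiples l (f (s * l) ^ b)" "supported_on_multiples l (f (t * l) ^ a)"
    by (simp_all add: supported_on_multiples_power supported_on_multiples_f)
qed (fact assms(5))

definition bounded_partitions :: "nat \<Rightarrow> nat \<Rightarrow> nat multiset set" where
  "bounded_partitions m n = {P. set_mset P \<subseteq> {1..m} \<and> sum_mset P = n}"

lemma size_le_sum_mset: "\<forall>x\<in>#P. 0 < x \<Longrightarrow> size P \<le> sum_mset (P :: nat multiset)"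
  by (induction P) auto

lemma member_le_sum_mset: "x \<in># P \<Longrightarrow> x \<le> sum_mset (P :: nat multiset)"
  by (induction P) auto

lemma finite_bounded_partitions: "finite (bounded_partitions m n)"
proof (rule finite_subset)
  show "bounded_partitions m n \<subseteq> (\<Union>s\<le>n. multisets_of_size {1..m} s)"
  proof
    fix P assume "P \<in> bounded_partitions m n"
    then have "set_mset P \<subseteq> {1..m}" "sum_mset P = n"
      by (auto simp: bounded_partitions_def)
    moreover from this have "size P \<le> n"
      using size_le_sum_mset[of P] by fastforce
    ultimately show "P \<in> (\<Union>s\<le>n. multisets_of_size {1..m} s)"
      by (auto simp: multisets_of_size_def)
  qed
qed auto

lemma bounded_partitions_0: "bounded_partitions 0 n = (if n = 0 then {{#}} else {})"
  by (auto simp: bounded_partitions_def)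

lemma bounded_partitions_eq_partitions_of:
  assumes "n \<le> m"
  shows "bounded_partitions m n = partitions_of n"
proof -
  have "set_mset P \<subseteq> {1..m} \<longleftrightarrow> (\<forall>x\<in>#P. 0 < x)" if "sum_mset P = n" for P
    using member_le_sum_mset[of _ P] that assms by fastforce
  then show ?thesis
    unfolding bounded_partitions_def partitions_of_def by blast
qed

lemma bounded_partitions_Suc:
  "bounded_partitions (Suc m) n = bounded_partitions m n \<union>
     (if Suc m \<le> n then add_mset (Suc m) ` bounded_partitions (Suc m) (n - Suc m) else {})"
  (is "?lhs = ?rhs")
proof
  show "?rhs \<subseteq> ?lhs"
    by (auto simp: bounded_partitions_def)
next
  show "?lhs \<subseteq> ?rhs"
  proof
    fix P assume P: "P \<in> ?lhs"
    show "P \<in> ?rhs"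
    proof (cases "Suc m \<in># P")
      case True
      define P' where "P' = P - {#Suc m#}"
      have P_eq: "P = add_mset (Suc m) P'"
        using True by (simp add: P'_def)
      then have "Suc m + sum_mset P' = n" "set_mset P' \<subseteq> {1..Suc m}"
        using P by (auto simp: bounded_partitions_def)
      then have "Suc m \<le> n" "P' \<in> bounded_partitions (Suc m) (n - Suc m)"
        by (auto simp: bounded_partitions_def)
      then show ?thesis
        using P_eq by simp
    next
      case False
      then show ?thesis
        using P by (auto simp: bounded_partitions_def atLeastAtMostSuc_conv)
    qed
  qed
qed

lemma card_bounded_partitions_Suc:
  "card (bounded_partitions (Suc m) n) = card (bounded_partitions m n) +
     (if Suc m \<le> n then card (bounded_partitions (Suc m) (n - Suc m)) else 0)"
proof -
  have "bounded_partitions m n \<inter> add_mset (Suc m) ` B = {}" for B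
    by (auto simp: bounded_partitions_def)
  moreover have "card (add_mset (Suc m) ` B) = card B" for B
    by (simp add: card_image inj_on_def)
  ultimately show ?thesis
    by (subst bounded_partitions_Suc) (simp add: card_Un_disjoint finite_bounded_partitions)
qed

lemma f_partial_1_mult_bounded_partitions_gf:
  "f_partial 1 m * Abs_fps (\<lambda>n. int (card (bounded_partitions m n))) = 1"
proof (induction m)
  case 0
  show ?case
    by (rule fps_ext) (simp add: f_partial_def bounded_partitions_0)
next
  case (Suc m)
  have "Abs_fps (\<lambda>n. int (card (bounded_partitions (Suc m) n))) * (1 - fps_X ^ Suc m)
      = Abs_fps (\<lambda>n. int (card (bounded_partitions m n)))"
    by (rule fps_ext)
      (simp add: right_diff_distrib fps_X_power_mult_right_nth card_bounded_partitions_Suc not_less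
        del: power_Suc)
  with Suc.IH show ?case
    by (simp add: f_partial_Suc ac_simps del: power_Suc)
qed

lemma f1_mult_partition_gf: "f 1 * Abs_fps (\<lambda>n. int (part n)) = 1"
proof (rule fps_ext)
  fix n
  have "(f 1 * Abs_fps (\<lambda>n. int (part n))) $ n = (\<Sum>i=0..n. f 1 $ i * int (part (n - i)))"
    by (simp add: fps_mult_nth)
  also have "\<dots> = (\<Sum>i=0..n. f_partial 1 n $ i
      * Abs_fps (\<lambda>n'. int (card (bounded_partitions n n'))) $ (n - i))"
    by (intro sum.cong refl)
      (simp add: f_nth_eq_f_partial bounded_partitions_eq_partitions_of part_def)
  also have "\<dots> = (1 :: int fps) $ n"
    by (simp only: fps_mult_nth[symmetric] f_partial_1_mult_bounded_partitions_gf)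
  finally show "(f 1 * Abs_fps (\<lambda>n. int (part n))) $ n = 1 $ n" .
qed

lemma dvd_mult_nth_arith_progression:
  fixes E P :: "'a::comm_semiring_1 fps"
  assumes "\<And>k. \<not> l dvd k \<Longrightarrow> c dvd E $ k"
    and "\<And>n. c dvd P $ (l * n + r)"
    and "r < l"
  shows "c dvd (E * P) $ (l * n + r)"
  unfolding fps_mult_nth
proof (rule dvd_sum)
  fix i assume i: "i \<in> {0..l * n + r}"
  show "c dvd E $ i * P $ (l * n + r - i)"
  proof (cases "l dvd i")
    case True
    then obtain j where j: "i = l * j" ..
    have "l * j < l * Suc n"
      using i j assms(3) by simp
    then have "j \<le> n"
      by (metis mult_less_cancel1 less_Suc_eq_le)
    then have "l * n + r - i = l * (n - j) + r"
      using j by (simp add: diff_mult_distrib2)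
    then show ?thesis
      using assms(2) by simp
  next
    case False
    then show ?thesis
      using assms(1) by simp
  qed
qed

theorem theorem3p2:
  fixes l r :: nat
  assumes "prime l"
    and "1 \<le> r" and "r \<le> l - 1"
    and "\<forall>n. l dvd part (l * n + r)"
  shows "\<forall>n. int l dvd d l (l * n + r)"
proof
  fix n
  define E where "E = f 2 ^ l * fps_right_inverse (f 1 ^ (3 * l + 1)) 1 * f 1"
  have "f 1 ^ (3 * l + 1) * fps_right_inverse (f 1 ^ (3 * l + 1)) 1 = 1"
    by (rule fps_right_inverse) (simp add: fps_nth_power_0 f_nth_0)
  then have "E * f 1 ^ (l * 3) = f 2 ^ (l * 1)"
    by (simp add: E_def algebra_simps)
  then have "int l dvd E $ k" if "\<not> l dvd k" for k
    using eta_quotient_nth_dvd[OF assms(1), of 1 2 E 3 1 k] that by simp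
  moreover have "int l dvd Abs_fps (\<lambda>n. int (part n)) $ (l * n + r)" for n
    using assms(4) by simp
  moreover have "r < l"
    using assms(3) prime_gt_0_nat[OF assms(1)] by linarith
  ultimately have "int l dvd (E * Abs_fps (\<lambda>n. int (part n))) $ (l * n + r)"
    by (rule dvd_mult_nth_arith_progression)
  also have "E * Abs_fps (\<lambda>n. int (part n)) = f 2 ^ l * fps_right_inverse (f 1 ^ (3 * l + 1)) 1"
    by (simp only: E_def mult.assoc f1_mult_partition_gf mult_1_right)
  finally show "int l dvd d l (l * n + r)"
    by (simp add: d_def)
qed

end
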